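(* Let $S$ be a simple $(l,r)$-framed algebra, $\lambda^1,\lambda^2\in\mathrm{IS}^{(l,r)}$, $a_1\in S_{\lambda^1}$, $a_2\in S_{\lambda^2}$. If $a_1\cdot a_2=0$, then $a_1=0$ or $a_2=0$.
   Context: Let $\mathrm{IS}=\{0,\frac12,\frac1{16}\}$ with fusion rule $\star$ (values are subsets): $0\star h=h\star0=\{h\}$, $\frac12\star\frac12=\{0\}$, $\frac12\star\frac1{16}=\frac1{16}\star\frac12=\{\frac1{16}\}$, $\frac1{16}\star\frac1{16}=\{0,\frac12\}$; $A(h_0,h_1,h_2,h_3)=\{h: h\in h_2\star h_3,\ h_0\in h_1\star h\}$. For $h\in A(h_0,h_1,h_2,h_3)$, $h'\in A(h_0,h_2,h_1,h_3)$ define $B^{h,h'}_{h_0,h_1,h_2,h_3}$: $B_{*,0,*,*}=B_{*,*,0,*}=1$; $B_{*,\frac12,\frac12,*}=-1$; $B_{a,\frac12,\frac1{16},a'}=B_{a,\frac1{16},\frac12,a'}=i$ if $a$ or $a'$ is $\frac12$, else $-i$; $B^{b,b'}_{a,\frac1{16},\frac1{16},a'}=e^{-\pi i/8}\cdot\{1$ if $a,a'\ne\frac1{16},a=a'$; $i$ if $a,a'\neq\frac1{16},a\ne a'$; $\frac{1+i}2$ if $a=a'=\frac1{16},b=b'$; $\frac{1-i}2$ if $a=a'=\frac1{16},b\neq b'\}$. $\mathrm{IS}^{(l,r)}=\mathrm{IS}^l\times\mathrm{IS}^r$, $\lambda=(h_1,..,h_l,\bar h_1,..,\bar h_r)$,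 $s(\lambda)=\sum h_i-\sum\bar h_j$; $\star$, $A$ componentwise; $B^{\lambda,\lambda'}_{\lambda^0,\dots,\lambda^3}=\prod_{i\le l}B^{h_i,h'_i}_{h^0_i,\dots,h^3_i}\prod_{j\le r}\overline{B^{\bar h_j,\bar h'_j}_{\bar h^0_j,\dots,\bar h^3_j}}$. An $(l,r)$-framed algebra: finite-dimensional $\mathrm{IS}^{(l,r)}$-graded $S=\bigoplus S_\lambda$ over $\mathbb{C}$ with bilinear product, nonzero $1\in S_0$, $a\cdot_\lambda b$ the $S_\lambda$-component of $a\cdot b$, satisfying (FA1) $S_\lambda=0$ unless $s(\lambda)\in\mathbb{Z}$; (FA2) $S_0=\mathbb{C}1$, $1$ a two-sided unit; (FA3) $S_{\lambda^1}\cdot S_{\lambda^2}\subset\bigoplus_{\lambda\in\lambda^1\star\lambda^2}S_\lambda$; (FA4) $a_2\cdot_{\lambda^0}(a_1\cdot_{\lambda'}a_3)=\sum_{\lambda\in A(\lambda^0,\lambda^1,\lambda^2,\lambda^3)}B^{\lambda,\lambda'}_{\lambda^0,\lambda^1,\lambda^2,\lambda^3}a_1\cdot_{\lambda^0}(a_2\cdot_\lambda a_3)$ for $a_i\in S_{\lambda^i}$, $\lambda'\in A(\lambda^0,\lambda^2,\lambda^1,\lambda^3)$. An ideal is a graded subspace $M$ with $S\cdot M\subset M$; $S$ is simple if its only ideals are $0$ and $S$. *)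

theory Defs
  imports Complex_Main
begin

datatype IS = I0 | Ihalf | I16

fun hval :: "IS \<Rightarrow> rat" where
  "hval I0 = 0"
| "hval Ihalf = 1/2"
| "hval I16 = 1/16"

fun fus :: "IS \<Rightarrow> IS \<Rightarrow> IS set" where
  "fus I0 h = {h}"
| "fus h I0 = {h}"
| "fus Ihalf Ihalf = {I0}"
| "fus Ihalf I16 = {I16}"
| "fus I16 Ihalf = {I16}"
| "fus I16 I16 = {I0, Ihalf}"

definition Aset :: "IS \<Rightarrow> IS \<Rightarrow> IS \<Rightarrow> IS \<Rightarrow> IS set" where
  "Aset h0 h1 h2 h3 = {h. h \<in> fus h2 h3 \<and> h0 \<in> fus h1 h}"

text \<open>Bc h h' h0 h1 h2 h3 is B^{h,h'}_{h0,h1,h2,h3}. Cases not covered by the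
  paper's definition are set to 0 (they never occur with h in A(h0,h1,h2,h3)
  and h' in A(h0,h2,h1,h3)).\<close>
definition Bc :: "IS \<Rightarrow> IS \<Rightarrow> IS \<Rightarrow> IS \<Rightarrow> IS \<Rightarrow> IS \<Rightarrow> complex" where
  "Bc b b' a h1 h2 a' =
    (if h1 = I0 \<or> h2 = I0 then 1
     else if h1 = Ihalf \<and> h2 = Ihalf then -1
     else if (h1 = Ihalf \<and> h2 = I16) \<or> (h1 = I16 \<and> h2 = Ihalf) then
       (if a = Ihalf \<or> a' = Ihalf then \<i> else - \<i>)
     else \<comment> \<open>h1 = h2 = 1/16\<close>
       exp (- (of_real pi / 8) * \<i>) *
       (if a \<noteq> I16 \<and> a' \<noteq> I16 \<and> a = a' then 1
        else if a \<noteq> I16 \<and> a' \<noteq> I16 \<and> a \<noteq> a' then \<i>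
        else if a = I16 \<and> a' = I16 \<and> b = b' then (1 + \<i>) / 2
        else if a = I16 \<and> a' = I16 \<and> b \<noteq> b' then (1 - \<i>) / 2
        else 0))"

text \<open>An element of IS^(l,r) is a pair (holomorphic part, antiholomorphic part)
  of lists of lengths l and r.\<close>
type_synonym idx = "IS list \<times> IS list"

definition Idx :: "nat \<Rightarrow> nat \<Rightarrow> idx set" where
  "Idx l r = {L. length (fst L) = l \<and> length (snd L) = r}"

definition zidx :: "nat \<Rightarrow> nat \<Rightarrow> idx" where
  "zidx l r = (replicate l I0, replicate r I0)"

definition sval :: "idx \<Rightarrow> rat" where
  "sval L = sum_list (map hval (fst L)) - sum_list (map hval (snd L))"

definition fusList :: "IS list \<Rightarrow> IS list \<Rightarrow> IS list set" where
  "fusList xs ys = {zs. length xs = length ys \<and> length zs = length xs \<and>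
      (\<forall>i<length xs. zs ! i \<in> fus (xs ! i) (ys ! i))}"

definition fusI :: "idx \<Rightarrow> idx \<Rightarrow> idx set" where
  "fusI L \<mu> = fusList (fst L) (fst \<mu>) \<times> fusList (snd L) (snd \<mu>)"

definition AList :: "IS list \<Rightarrow> IS list \<Rightarrow> IS list \<Rightarrow> IS list \<Rightarrow> IS list set" where
  "AList x0 x1 x2 x3 = {zs. length x1 = length x0 \<and> length x2 = length x0 \<and>
      length x3 = length x0 \<and> length zs = length x0 \<and>
      (\<forall>i<length x0. zs ! i \<in> Aset (x0 ! i) (x1 ! i) (x2 ! i) (x3 ! i))}"

definition AI :: "idx \<Rightarrow> idx \<Rightarrow> idx \<Rightarrow> idx \<Rightarrow> idx set" where
  "AI l0 l1 l2 l3 = AList (fst l0) (fst l1) (fst l2) (fst l3) \<times>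
                    AList (snd l0) (snd l1) (snd l2) (snd l3)"

definition BI :: "idx \<Rightarrow> idx \<Rightarrow> idx \<Rightarrow> idx \<Rightarrow> idx \<Rightarrow> idx \<Rightarrow> complex" where
  "BI m m' l0 l1 l2 l3 =
     (\<Prod>i<length (fst l0). Bc (fst m ! i) (fst m' ! i) (fst l0 ! i) (fst l1 ! i)
                                (fst l2 ! i) (fst l3 ! i)) *
     (\<Prod>j<length (snd l0). cnj (Bc (snd m ! j) (snd m' ! j) (snd l0 ! j) (snd l1 ! j)
                                (snd l2 ! j) (snd l3 ! j)))"

text \<open>The algebra is the whole carrier type 'a, a complex vector space with
  scalar multiplication sc. The grading S = (+) S_L is encoded by the
  family of projections pr L onto the homogeneous components:
  S_L = range (pr L), and a \<cdot>_L b = pr L (mul a b).\<close>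

definition graded_space ::
  "(complex \<Rightarrow> 'a::ab_group_add \<Rightarrow> 'a) \<Rightarrow> nat \<Rightarrow> nat \<Rightarrow> (idx \<Rightarrow> 'a \<Rightarrow> 'a) \<Rightarrow> bool" where
  "graded_space sc l r pr \<longleftrightarrow>
     Vector_Spaces.vector_space sc \<and>
     (\<exists>B. finite B \<and> module.span sc B = UNIV) \<and>
     (\<forall>L. Vector_Spaces.linear sc sc (pr L)) \<and>
     (\<forall>L \<mu> x. pr L (pr \<mu> x) = (if L = \<mu> then pr L x else 0)) \<and>
     (\<forall>L x. L \<notin> Idx l r \<longrightarrow> pr L x = 0) \<and>
     (\<forall>x. x = (\<Sum>L\<in>Idx l r. pr L x))"

definition homog :: "(idx \<Rightarrow> 'a \<Rightarrow> 'a) \<Rightarrow> idx \<Rightarrow> 'a \<Rightarrow> bool" where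
  "homog pr L a \<longleftrightarrow> pr L a = a"

definition framed_algebra ::
  "nat \<Rightarrow> nat \<Rightarrow> (complex \<Rightarrow> 'a::ab_group_add \<Rightarrow> 'a) \<Rightarrow> (idx \<Rightarrow> 'a \<Rightarrow> 'a)
     \<Rightarrow> ('a \<Rightarrow> 'a \<Rightarrow> 'a) \<Rightarrow> 'a \<Rightarrow> bool" where
  "framed_algebra l r sc pr mul one \<longleftrightarrow>
     graded_space sc l r pr \<and>
     \<comment> \<open>bilinear product\<close>
     (\<forall>a. Vector_Spaces.linear sc sc (mul a)) \<and>
     (\<forall>b. Vector_Spaces.linear sc sc (\<lambda>a. mul a b)) \<and>
     \<comment> \<open>nonzero unit in S_0\<close>
     one \<noteq> 0 \<and> homog pr (zidx l r) one \<and>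
     \<comment> \<open>(FA1)\<close>
     (\<forall>L x. sval L \<notin> \<int> \<longrightarrow> pr L x = 0) \<and>
     \<comment> \<open>(FA2)\<close>
     (\<forall>x. homog pr (zidx l r) x \<longrightarrow> (\<exists>c. x = sc c one)) \<and>
     (\<forall>x. mul one x = x \<and> mul x one = x) \<and>
     \<comment> \<open>(FA3)\<close>
     (\<forall>L1 L2 a b L. homog pr L1 a \<longrightarrow> homog pr L2 b \<longrightarrow> L \<notin> fusI L1 L2 \<longrightarrow>
        pr L (mul a b) = 0) \<and>
     \<comment> \<open>(FA4)\<close>
     (\<forall>L0 L1 L2 L3 a1 a2 a3 L'.
        L0 \<in> Idx l r \<longrightarrow> L1 \<in> Idx l r \<longrightarrow> L2 \<in> Idx l r \<longrightarrow> L3 \<in> Idx l r \<longrightarrow>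
        homog pr L1 a1 \<longrightarrow> homog pr L2 a2 \<longrightarrow> homog pr L3 a3 \<longrightarrow>
        L' \<in> AI L0 L2 L1 L3 \<longrightarrow>
        pr L0 (mul a2 (pr L' (mul a1 a3))) =
          (\<Sum>L\<in>AI L0 L1 L2 L3.
              sc (BI L L' L0 L1 L2 L3) (pr L0 (mul a1 (pr L (mul a2 a3))))))"

definition fa_ideal ::
  "(complex \<Rightarrow> 'a::ab_group_add \<Rightarrow> 'a) \<Rightarrow> (idx \<Rightarrow> 'a \<Rightarrow> 'a) \<Rightarrow> ('a \<Rightarrow> 'a \<Rightarrow> 'a)
     \<Rightarrow> 'a set \<Rightarrow> bool" where
  "fa_ideal sc pr mul M \<longleftrightarrow>
     module.subspace sc M \<and>
     (\<forall>x\<in>M. \<forall>L. pr L x \<in> M) \<and>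
     (\<forall>a. \<forall>x\<in>M. mul a x \<in> M)"

definition simple_framed_algebra ::
  "nat \<Rightarrow> nat \<Rightarrow> (complex \<Rightarrow> 'a::ab_group_add \<Rightarrow> 'a) \<Rightarrow> (idx \<Rightarrow> 'a \<Rightarrow> 'a)
     \<Rightarrow> ('a \<Rightarrow> 'a \<Rightarrow> 'a) \<Rightarrow> 'a \<Rightarrow> bool" where
  "simple_framed_algebra l r sc pr mul one \<longleftrightarrow>
     framed_algebra l r sc pr mul one \<and>
     (\<forall>M. fa_ideal sc pr mul M \<longrightarrow> M = {0} \<or> M = UNIV)"

end

theory Submission
  imports Defs
begin

text \<open>The elements all of whose homogeneous components are annihilated by left multiplication
  with a homogeneous a form an ideal: the braiding relation (FA4) rewrites a \<cdot> (b \<cdot> y) as a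
  combination of the terms b \<cdot> (a \<cdot> y), and the fusion rules (FA3) dispose of the remaining
  components. If a1 \<cdot> a2 = 0 with a2 \<noteq> 0, this ideal is nonzero, so by simplicity it contains
  the unit, and a1 = a1 \<cdot> 1 = 0.\<close>

lemma AList_memI:
  assumes "length x1 = length x0" "length x2 = length x0" "length x3 = length x0"
    and "zs \<in> fusList x2 x3" and "x0 \<in> fusList x1 zs"
  shows "zs \<in> AList x0 x1 x2 x3"
  using assms by (auto simp: AList_def fusList_def Aset_def)

lemma AI_memI:
  assumes "L0 \<in> Idx l r" "L1 \<in> Idx l r" "L2 \<in> Idx l r" "L3 \<in> Idx l r"
    and "L \<in> fusI L2 L3" and "L0 \<in> fusI L1 L"
  shows "L \<in> AI L0 L1 L2 L3"
  using assms by (auto simp: AI_def fusI_def Idx_def intro!: AList_memI)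

definition graded_left_annihilator :: "('i \<Rightarrow> 'a \<Rightarrow> 'a) \<Rightarrow> ('a \<Rightarrow> 'a \<Rightarrow> 'a) \<Rightarrow> 'a \<Rightarrow> 'a::zero set"
  where "graded_left_annihilator pr mul a = {x. \<forall>L. mul a (pr L x) = 0}"

locale framed_alg =
  fixes l r :: nat
    and sc :: "complex \<Rightarrow> 'a::ab_group_add \<Rightarrow> 'a"
    and pr :: "idx \<Rightarrow> 'a \<Rightarrow> 'a"
    and mul :: "'a \<Rightarrow> 'a \<Rightarrow> 'a"
    and one :: 'a
  assumes framed: "framed_algebra l r sc pr mul one"
begin

sublocale vs: module sc
  using framed unfolding framed_algebra_def graded_space_def module_iff_vector_space by blast

lemma pr_module_hom: "module_hom sc sc (pr L)"
  using framed unfolding framed_algebra_def graded_space_def linear_iff_module_hom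
  by (elim conjE) (rule spec)

lemma mul_module_hom: "module_hom sc sc (mul a)"
  using framed unfolding framed_algebra_def linear_iff_module_hom by blast

lemma mul_left_module_hom: "module_hom sc sc (\<lambda>a. mul a b)"
  using framed unfolding framed_algebra_def linear_iff_module_hom by blast

lemma pr_pr: "pr L (pr \<mu> x) = (if L = \<mu> then pr L x else 0)"
  using framed unfolding framed_algebra_def graded_space_def by metis

lemma pr_eq_0_outside_Idx: "L \<notin> Idx l r \<Longrightarrow> pr L x = 0"
  using framed unfolding framed_algebra_def graded_space_def by metis

lemma sum_pr: "(\<Sum>L\<in>Idx l r. pr L x) = x"
  using framed unfolding framed_algebra_def graded_space_def by metis

lemma homog_one: "homog pr (zidx l r) one"
  using framed unfolding framed_algebra_def by blast

lemma mul_one_right: "mul x one = x"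
  using framed unfolding framed_algebra_def by blast

lemma pr_mul_eq_0_if_notin_fusI:
  "homog pr L1 a \<Longrightarrow> homog pr L2 b \<Longrightarrow> L \<notin> fusI L1 L2 \<Longrightarrow> pr L (mul a b) = 0"
  using framed unfolding framed_algebra_def by blast

lemma pr_mul_pr_mul_braiding:
  assumes "L0 \<in> Idx l r" "L1 \<in> Idx l r" "L2 \<in> Idx l r" "L3 \<in> Idx l r"
    and "homog pr L1 a1" "homog pr L2 a2" "homog pr L3 a3" "L' \<in> AI L0 L2 L1 L3"
  shows "pr L0 (mul a2 (pr L' (mul a1 a3))) =
           (\<Sum>L\<in>AI L0 L1 L2 L3. sc (BI L L' L0 L1 L2 L3) (pr L0 (mul a1 (pr L (mul a2 a3)))))"
  using framed assms unfolding framed_algebra_def by blast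

lemma pr_0 [simp]: "pr L 0 = 0"
  by (rule module_hom.zero[OF pr_module_hom])

lemma mul_0_right [simp]: "mul a 0 = 0"
  by (rule module_hom.zero[OF mul_module_hom])

lemma homog_pr: "homog pr L (pr L x)"
  by (simp add: homog_def pr_pr)

lemma pr_homog: "homog pr \<mu> x \<Longrightarrow> pr L x = (if L = \<mu> then x else 0)"
  by (metis homog_def pr_pr)

lemma mul_eq_sum_homog: "mul b x = (\<Sum>\<mu>\<in>Idx l r. \<Sum>\<nu>\<in>Idx l r. mul (pr \<mu> b) (pr \<nu> x))"
proof -
  have "mul b x = (\<Sum>\<mu>\<in>Idx l r. mul (pr \<mu> b) x)"
    using module_hom.sum[OF mul_left_module_hom] by (metis sum_pr)
  also have "\<dots> = (\<Sum>\<mu>\<in>Idx l r. \<Sum>\<nu>\<in>Idx l r. mul (pr \<mu> b) (pr \<nu> x))"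
    using module_hom.sum[OF mul_module_hom] by (metis sum_pr)
  finally show ?thesis .
qed

lemma pr_mul_pr_mul_eq_0:
  assumes "L1 \<in> Idx l r" "\<mu> \<in> Idx l r" "\<nu> \<in> Idx l r"
    and "homog pr L1 a" "homog pr \<mu> b" "homog pr \<nu> y" and "mul a y = 0"
  shows "pr L0 (mul a (pr L (mul b y))) = 0"
proof (cases "L0 \<in> Idx l r \<and> L \<in> Idx l r \<and> L \<in> fusI \<mu> \<nu> \<and> L0 \<in> fusI L1 L")
  case True
  then have "L \<in> AI L0 L1 \<mu> \<nu>"
    using assms(1-3) by (blast intro: AI_memI)
  with True assms(1-6)
  have "pr L0 (mul a (pr L (mul b y))) =
          (\<Sum>L'\<in>AI L0 \<mu> L1 \<nu>. sc (BI L' L L0 \<mu> L1 \<nu>) (pr L0 (mul b (pr L' (mul a y)))))"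
    by (intro pr_mul_pr_mul_braiding) auto
  then show ?thesis
    using \<open>mul a y = 0\<close> by simp
next
  case False
  then show ?thesis
    using assms(4-6) homog_pr pr_eq_0_outside_Idx pr_mul_eq_0_if_notin_fusI
    by (metis mul_0_right pr_0)
qed

lemma mul_pr_mul_eq_0:
  assumes "L1 \<in> Idx l r" "\<mu> \<in> Idx l r" "\<nu> \<in> Idx l r"
    and "homog pr L1 a" "homog pr \<mu> b" "homog pr \<nu> y" and "mul a y = 0"
  shows "mul a (pr L (mul b y)) = 0"
  using pr_mul_pr_mul_eq_0[OF assms] by (metis sum.neutral sum_pr)

lemma subspace_graded_left_annihilator: "vs.subspace (graded_left_annihilator pr mul a)"
proof -
  have "graded_left_annihilator pr mul a = (\<Inter>L. {x. (mul a \<circ> pr L) x = 0})"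
    by (auto simp: graded_left_annihilator_def)
  then show ?thesis
    using module_hom.subspace_kernel[OF module_hom_compose[OF pr_module_hom mul_module_hom]]
    by (simp add: vs.subspace_Int)
qed

lemma mul_mem_graded_left_annihilator:
  assumes "L1 \<in> Idx l r" "homog pr L1 a" and x: "x \<in> graded_left_annihilator pr mul a"
  shows "mul b x \<in> graded_left_annihilator pr mul a"
proof -
  have "mul a (pr L (mul b x)) = 0" for L
  proof -
    have "mul a (pr L (mul b x)) =
            (\<Sum>\<mu>\<in>Idx l r. \<Sum>\<nu>\<in>Idx l r. mul a (pr L (mul (pr \<mu> b) (pr \<nu> x))))"
      by (subst mul_eq_sum_homog)
        (simp add: module_hom.sum[OF pr_module_hom] module_hom.sum[OF mul_module_hom])
    also have "\<dots> = 0"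
    proof (intro sum.neutral ballI)
      fix \<mu> \<nu> assume "\<mu> \<in> Idx l r" "\<nu> \<in> Idx l r"
      moreover have "mul a (pr \<nu> x) = 0"
        using x unfolding graded_left_annihilator_def by blast
      ultimately show "mul a (pr L (mul (pr \<mu> b) (pr \<nu> x))) = 0"
        using assms(1,2) homog_pr by (blast intro: mul_pr_mul_eq_0)
    qed
    finally show ?thesis .
  qed
  then show ?thesis
    by (simp add: graded_left_annihilator_def)
qed

lemma fa_ideal_graded_left_annihilator:
  assumes "L1 \<in> Idx l r" "homog pr L1 a"
  shows "fa_ideal sc pr mul (graded_left_annihilator pr mul a)"
  using assms subspace_graded_left_annihilator mul_mem_graded_left_annihilator
  by (auto simp: fa_ideal_def graded_left_annihilator_def pr_pr)

lemma homog_mem_graded_left_annihilator: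
  "homog pr \<mu> y \<Longrightarrow> mul a y = 0 \<Longrightarrow> y \<in> graded_left_annihilator pr mul a"
  by (simp add: graded_left_annihilator_def pr_homog)

lemma eq_0_if_one_mem_graded_left_annihilator:
  assumes "one \<in> graded_left_annihilator pr mul a"
  shows "a = 0"
proof -
  have "mul a (pr (zidx l r) one) = 0"
    using assms unfolding graded_left_annihilator_def by blast
  then show ?thesis
    using homog_one mul_one_right by (simp add: homog_def)
qed

end

theorem mainTheorem4:
  fixes sc :: "complex \<Rightarrow> 'a::ab_group_add \<Rightarrow> 'a"
    and pr :: "idx \<Rightarrow> 'a \<Rightarrow> 'a"
    and mul :: "'a \<Rightarrow> 'a \<Rightarrow> 'a"
    and one a1 a2 :: 'a
    and l r :: nat
    and L1 L2 :: idx
  assumes "simple_framed_algebra l r sc pr mul one"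
    and "L1 \<in> Idx l r" and "L2 \<in> Idx l r"
    and "homog pr L1 a1" and "homog pr L2 a2"
    and "mul a1 a2 = 0"
  shows "a1 = 0 \<or> a2 = 0"
proof -
  interpret framed_alg l r sc pr mul one
    using assms(1) by unfold_locales (simp add: simple_framed_algebra_def)
  let ?M = "graded_left_annihilator pr mul a1"
  have "fa_ideal sc pr mul ?M"
    using assms(2,4) by (rule fa_ideal_graded_left_annihilator)
  then have "?M = {0} \<or> ?M = UNIV"
    using assms(1) by (simp add: simple_framed_algebra_def)
  moreover have "a2 \<in> ?M"
    using assms(5,6) by (rule homog_mem_graded_left_annihilator)
  moreover have "?M = UNIV \<Longrightarrow> a1 = 0"
    using eq_0_if_one_mem_graded_left_annihilator by blast
  ultimately show ?thesis
    by blast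
qed

end
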